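(* For any integers $n\ge4$ and $k<\frac{n-1}{2}$, the Cayley graph of $\mathbb{Z}_n$ with generators $\{\pm1,\dots,\pm k\}$ (i.e. the graph on $\{0,\dots,n-1\}$ where $i,j$ are adjacent iff $j-i\equiv\pm g\pmod n$ for some $g\in\{1,\dots,k\}$) has broadcast rate $\beta=n/(k+1)$.
   Context: For an undirected graph $G$ on vertex set $V$, consider the index coding problem: a server holds messages $x_v\in\Sigma$ ($|\Sigma|>1$), receiver $v$ wants $x_v$ and knows $x_u$ for every neighbor $u$ of $v$. A solution is an encoding $\mathcal{E}:\Sigma^{V}\to\Sigma_P$ from which each receiver can recover its message given its side information, for all message values. $\beta_t(G)$ is the minimum of $\lceil\log_2|\Sigma_P|\rceil$ over solutions with $|\Sigma|=2^t$, and the broadcast rate is $\beta(G)=\lim_t\beta_t(G)/t=\inf_t\beta_t(G)/t$. *)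

theory Defs
  imports "HOL-Analysis.Analysis" "HOL-Number_Theory.Cong"
begin

text \<open>An encoding E maps message vectors into the
  public alphabet P.  Receiver v knows x restricted to N v and must decode x v.\<close>

definition msgs :: "'v set \<Rightarrow> nat \<Rightarrow> ('v \<Rightarrow> nat) set" where
  "msgs V t = PiE V (\<lambda>_. {..<2^t})"

definition ic_solution ::
  "'v set \<Rightarrow> ('v \<Rightarrow> 'v set) \<Rightarrow> nat \<Rightarrow> nat set \<Rightarrow> (('v \<Rightarrow> nat) \<Rightarrow> nat) \<Rightarrow> bool" where
  "ic_solution V N t P E \<longleftrightarrow>
     (\<forall>x\<in>msgs V t. E x \<in> P) \<and>
     (\<forall>v\<in>V. \<exists>D :: nat \<Rightarrow> ('v \<Rightarrow> nat) \<Rightarrow> nat.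
        \<forall>x\<in>msgs V t. D (E x) (restrict x (N v)) = x v)"

definition beta_t :: "'v set \<Rightarrow> ('v \<Rightarrow> 'v set) \<Rightarrow> nat \<Rightarrow> nat" where
  "beta_t V N t = (LEAST m. \<exists>P E. finite P \<and> ic_solution V N t P E \<and>
                               m = nat \<lceil>log 2 (real (card P))\<rceil>)"

definition broadcast_rate :: "'v set \<Rightarrow> ('v \<Rightarrow> 'v set) \<Rightarrow> real" where
  "broadcast_rate V N = (INF t\<in>{1..}. real (beta_t V N t) / real t)"

definition circ_nbrs :: "nat \<Rightarrow> nat \<Rightarrow> nat \<Rightarrow> nat set" where
  "circ_nbrs n k i = {j \<in> {0..<n}. \<exists>g\<in>{1..k}.
       [int j - int i = int g] (mod int n) \<or> [int j - int i = - int g] (mod int n)}"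

end

theory Submission
  imports Defs
begin

text \<open>Fix a solution E for t-bit messages and let f S = H(E, x_S) - t |S|,
  the entropy taken over uniformly random messages.  Then f is submodular, decreases by exactly
  t when a vertex is added to a set containing its neighbourhood, vanishes on V, is maximal at
  the empty set, and f {} \<le> log |P|.  Summing f over all n rotations of the arcs of length L
  gives a sequence that is concave in L; splitting an arc of length 2k+1 at its middle vertex
  shows that the sequence drops by at least n t between k and 2k+1, while at length n - 1 it is
  still n t.  Concavity then yields n f {} \<ge> n^2 t / (k+1).

  For t = k + 1, broadcast for every j the parity of the bits i of the messages
  j + i (i \<le> k); receiver v reads bit i of its message off the parity at j = v - i, all other
  summands being side information.  This uses n bits, so beta_(k+1) \<le> n.\<close>

definition fiber_card :: "'a set \<Rightarrow> ('a \<Rightarrow> 'b) \<Rightarrow> 'a \<Rightarrow> nat" where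
  "fiber_card \<Omega> F w = card {w'\<in>\<Omega>. F w' = F w}"

definition uniform_entropy :: "'a set \<Rightarrow> ('a \<Rightarrow> 'b) \<Rightarrow> real" where
  "uniform_entropy \<Omega> F =
     (\<Sum>w\<in>\<Omega>. log 2 (real (card \<Omega>) / real (fiber_card \<Omega> F w))) / real (card \<Omega>)"

lemma fiber_card_pos: "finite \<Omega> \<Longrightarrow> w \<in> \<Omega> \<Longrightarrow> 0 < fiber_card \<Omega> F w"
  unfolding fiber_card_def by (subst card_gt_0_iff) auto

lemma uniform_entropy_cong:
  assumes "\<And>w w'. w \<in> \<Omega> \<Longrightarrow> w' \<in> \<Omega> \<Longrightarrow> F w' = F w \<longleftrightarrow> G w' = G w"
  shows "uniform_entropy \<Omega> F = uniform_entropy \<Omega> G"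
proof -
  have "fiber_card \<Omega> F w = fiber_card \<Omega> G w" if "w \<in> \<Omega>" for w
    unfolding fiber_card_def using assms[OF that] by (metis (no_types, lifting))
  then show ?thesis unfolding uniform_entropy_def by (simp cong: sum.cong)
qed

lemma uniform_entropy_const: "uniform_entropy \<Omega> (\<lambda>w. c) = 0"
  by (simp add: uniform_entropy_def fiber_card_def)

lemma sum_inverse_fiber_card:
  assumes fin: "finite \<Omega>"
  shows "(\<Sum>w\<in>\<Omega>. 1 / real (fiber_card \<Omega> F w)) = real (card (F ` \<Omega>))"
proof -
  have "(\<Sum>w\<in>\<Omega>. 1 / real (fiber_card \<Omega> F w))
      = (\<Sum>y\<in>F ` \<Omega>. \<Sum>w\<in>{x\<in>\<Omega>. F x = y}. 1 / real (fiber_card \<Omega> F w))"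
    by (rule sum.image_gen[OF fin])
  also have "\<dots> = (\<Sum>y\<in>F ` \<Omega>. 1)"
  proof (rule sum.cong[OF refl])
    fix y assume y: "y \<in> F ` \<Omega>"
    let ?T = "{x\<in>\<Omega>. F x = y}"
    have "fiber_card \<Omega> F w = card ?T" if "w \<in> ?T" for w
      using that unfolding fiber_card_def by (metis (mono_tags, lifting) mem_Collect_eq)
    moreover have "card ?T > 0" using y fin by (subst card_gt_0_iff) auto
    ultimately show "(\<Sum>w\<in>?T. 1 / real (fiber_card \<Omega> F w)) = 1" by simp
  qed
  finally show ?thesis by simp
qed

lemma log2_le_diff_one: "0 < (u::real) \<Longrightarrow> log 2 u \<le> (u - 1) / ln 2"
  by (simp add: log_def divide_right_mono ln_le_minus_one)

lemma log2_ge_one_minus_inverse: "0 < (u::real) \<Longrightarrow> (1 - 1 / u) / ln 2 \<le> log 2 u"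
proof -
  assume u: "0 < u"
  have "ln (1 / u) \<le> 1 / u - 1" using u by (simp add: ln_le_minus_one)
  then have "1 - 1 / u \<le> ln u" using u by (simp add: ln_div)
  then show ?thesis by (simp add: log_def divide_right_mono)
qed

lemma uniform_entropy_le_log_card_image:
  assumes fin: "finite \<Omega>" and ne: "\<Omega> \<noteq> {}"
  shows "uniform_entropy \<Omega> F \<le> log 2 (real (card (F ` \<Omega>)))"
proof -
  define N where "N = real (card \<Omega>)"
  define K where "K = real (card (F ` \<Omega>))"
  define c where "c w = real (fiber_card \<Omega> F w)" for w
  have N: "N > 0" and K: "K > 0" using fin ne by (simp_all add: N_def K_def card_gt_0_iff)
  have c: "c w > 0" if "w \<in> \<Omega>" for w using fiber_card_pos[OF fin that] by (simp add: c_def)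
  have "(\<Sum>w\<in>\<Omega>. log 2 (N / c w)) - N * log 2 K = (\<Sum>w\<in>\<Omega>. log 2 (N / (K * c w)))"
  proof -
    have "log 2 (N / (K * c w)) = log 2 (N / c w) - log 2 K" if "w \<in> \<Omega>" for w
      using N K c[OF that] by (simp add: log_divide log_mult)
    then show ?thesis by (simp add: sum_subtractf N_def cong: sum.cong)
  qed
  also have "\<dots> \<le> (\<Sum>w\<in>\<Omega>. (N / (K * c w) - 1) / ln 2)"
    by (rule sum_mono, rule log2_le_diff_one) (use N K c in auto)
  also have "\<dots> = ((N / K) * (\<Sum>w\<in>\<Omega>. 1 / c w) - N) / ln 2"
    by (simp add: sum_divide_distrib[symmetric] sum_subtractf sum_distrib_left N_def)
  also have "\<dots> = 0" using K by (simp add: c_def sum_inverse_fiber_card[OF fin] K_def)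
  finally have "(\<Sum>w\<in>\<Omega>. log 2 (N / c w)) \<le> N * log 2 K" by simp
  then show ?thesis unfolding uniform_entropy_def N_def[symmetric] K_def[symmetric] c_def[symmetric]
    using N by (simp add: divide_le_eq mult.commute)
qed

lemma sum_common_fiber_le:
  fixes X :: "'a \<Rightarrow> 'b" and Y :: "'a \<Rightarrow> 'c" and Z :: "'a \<Rightarrow> 'd" and p q :: 'a
  assumes fin: "finite \<Omega>"
  defines "T \<equiv> {w\<in>\<Omega>. X w = X p \<and> Y w = Y q \<and> Z w = Z p \<and> Z w = Z q}"
  shows "(\<Sum>w\<in>T. 1 / (real (fiber_card \<Omega> (\<lambda>w. (X w, Y w, Z w)) w) * real (fiber_card \<Omega> Z w)))
         \<le> (if Z p = Z q then 1 / real (fiber_card \<Omega> Z p) else 0)"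
proof (cases "T = {}")
  case False
  then obtain w0 where w0: "w0 \<in> T" by auto
  have "fiber_card \<Omega> (\<lambda>w. (X w, Y w, Z w)) w = card T" if "w \<in> T" for w
  proof -
    have "{w'\<in>\<Omega>. (X w', Y w', Z w') = (X w, Y w, Z w)} = T" using that by (auto simp: T_def)
    then show ?thesis by (simp add: fiber_card_def)
  qed
  moreover have "fiber_card \<Omega> Z w = fiber_card \<Omega> Z p" if "w \<in> T" for w
    using that by (simp add: fiber_card_def T_def)
  ultimately have "(\<Sum>w\<in>T. 1 / (real (fiber_card \<Omega> (\<lambda>w. (X w, Y w, Z w)) w) * real (fiber_card \<Omega> Z w)))
      = (\<Sum>w\<in>T. 1 / (real (card T) * real (fiber_card \<Omega> Z p)))"
    by simp
  also have "\<dots> = 1 / real (fiber_card \<Omega> Z p)" using False fin by (simp add: T_def card_gt_0_iff)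
  moreover have "Z p = Z q" using w0 by (auto simp: T_def)
  ultimately show ?thesis by simp
qed simp

text \<open>The double counting behind Shannon's inequality I(X;Y|Z) \<ge> 0.\<close>

lemma sum_fiber_card_ratio_le:
  assumes fin: "finite \<Omega>"
  shows "(\<Sum>w\<in>\<Omega>. real (fiber_card \<Omega> (\<lambda>w. (X w, Z w)) w) * real (fiber_card \<Omega> (\<lambda>w. (Y w, Z w)) w)
            / (real (fiber_card \<Omega> (\<lambda>w. (X w, Y w, Z w)) w) * real (fiber_card \<Omega> Z w)))
         \<le> real (card \<Omega>)"
proof -
  define a where "a w = real (fiber_card \<Omega> (\<lambda>w. (X w, Y w, Z w)) w)" for w
  define z where "z w = real (fiber_card \<Omega> Z w)" for w
  define A where "A w = {w1\<in>\<Omega>. (X w1, Z w1) = (X w, Z w)}" for w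
  define B where "B w = {w2\<in>\<Omega>. (Y w2, Z w2) = (Y w, Z w)}" for w
  have AB: "A w \<times> B w \<subseteq> \<Omega> \<times> \<Omega>" for w by (auto simp: A_def B_def)
  have term_as_sum: "real (fiber_card \<Omega> (\<lambda>w. (X w, Z w)) w) * real (fiber_card \<Omega> (\<lambda>w. (Y w, Z w)) w)
      / (a w * z w) = (\<Sum>u\<in>\<Omega>\<times>\<Omega>. if u \<in> A w \<times> B w then 1 / (a w * z w) else 0)" for w
    using fin AB by (simp add: sum.If_cases Int_absorb1 fiber_card_def A_def B_def card_cartesian_product)
  have pair_bound: "(\<Sum>w\<in>\<Omega>. if u \<in> A w \<times> B w then 1 / (a w * z w) else 0)
      \<le> (if Z (fst u) = Z (snd u) then 1 / z (fst u) else 0)" if u_mem: "u \<in> \<Omega> \<times> \<Omega>" for u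
  proof -
    obtain w1 w2 where u: "u = (w1, w2)" "w1 \<in> \<Omega>" "w2 \<in> \<Omega>" using u_mem by auto
    have "(\<Sum>w\<in>\<Omega>. if u \<in> A w \<times> B w then 1 / (a w * z w) else 0)
        = (\<Sum>w\<in>{w\<in>\<Omega>. X w = X w1 \<and> Y w = Y w2 \<and> Z w = Z w1 \<and> Z w = Z w2}. 1 / (a w * z w))"
      using u by (auto simp: sum.inter_filter[OF fin, symmetric] A_def B_def intro!: sum.cong)
    then show ?thesis unfolding a_def z_def u(1) fst_conv snd_conv
      by (rule ord_eq_le_trans[OF _ sum_common_fiber_le[OF fin]])
  qed
  have "(\<Sum>w\<in>\<Omega>. real (fiber_card \<Omega> (\<lambda>w. (X w, Z w)) w) * real (fiber_card \<Omega> (\<lambda>w. (Y w, Z w)) w)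
          / (a w * z w))
      = (\<Sum>u\<in>\<Omega>\<times>\<Omega>. \<Sum>w\<in>\<Omega>. if u \<in> A w \<times> B w then 1 / (a w * z w) else 0)"
    by (simp add: term_as_sum sum.swap[where A = \<Omega>])
  also have "\<dots> \<le> (\<Sum>u\<in>\<Omega>\<times>\<Omega>. if Z (fst u) = Z (snd u) then 1 / z (fst u) else 0)"
    by (intro sum_mono pair_bound)
  also have "\<dots> = (\<Sum>w1\<in>\<Omega>. \<Sum>w2\<in>\<Omega>. if Z w1 = Z w2 then 1 / z w1 else 0)"
    by (subst sum.cartesian_product) (simp add: split_beta)
  also have "\<dots> = (\<Sum>w1\<in>\<Omega>. \<Sum>w2\<in>{w2\<in>\<Omega>. Z w2 = Z w1}. 1 / z w1)"
    unfolding sum.inter_filter[OF fin] by (intro sum.cong) auto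
  also have "\<dots> = (\<Sum>w1\<in>\<Omega>. 1)"
    using fiber_card_pos[OF fin] by (intro sum.cong) (simp_all add: z_def fiber_card_def)
  finally show ?thesis by (simp add: a_def z_def)
qed

lemma uniform_entropy_submodular:
  assumes fin: "finite \<Omega>"
  shows "uniform_entropy \<Omega> (\<lambda>w. (X w, Y w, Z w)) + uniform_entropy \<Omega> Z
         \<le> uniform_entropy \<Omega> (\<lambda>w. (X w, Z w)) + uniform_entropy \<Omega> (\<lambda>w. (Y w, Z w))"
proof (cases "\<Omega> = {}")
  case True then show ?thesis by (simp add: uniform_entropy_def)
next
  case False
  define N where "N = real (card \<Omega>)"
  define a where "a w = real (fiber_card \<Omega> (\<lambda>w. (X w, Y w, Z w)) w)" for w
  define z where "z w = real (fiber_card \<Omega> Z w)" for w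
  define p where "p w = real (fiber_card \<Omega> (\<lambda>w. (X w, Z w)) w)" for w
  define q where "q w = real (fiber_card \<Omega> (\<lambda>w. (Y w, Z w)) w)" for w
  have N: "N > 0" using fin False by (simp add: N_def card_gt_0_iff)
  have pos: "a w > 0" "z w > 0" "p w > 0" "q w > 0" if "w \<in> \<Omega>" for w
    using fiber_card_pos[OF fin that] by (auto simp: a_def z_def p_def q_def)
  have "(\<Sum>w\<in>\<Omega>. log 2 (N / p w)) + (\<Sum>w\<in>\<Omega>. log 2 (N / q w))
        - (\<Sum>w\<in>\<Omega>. log 2 (N / a w)) - (\<Sum>w\<in>\<Omega>. log 2 (N / z w))
      = (\<Sum>w\<in>\<Omega>. log 2 ((a w * z w) / (p w * q w)))"
  proof -
    have "log 2 ((a w * z w) / (p w * q w))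
        = log 2 (N / p w) + log 2 (N / q w) - log 2 (N / a w) - log 2 (N / z w)" if "w \<in> \<Omega>" for w
      using pos[OF that] N by (simp add: log_divide log_mult)
    then show ?thesis by (simp add: sum.distrib sum_subtractf cong: sum.cong)
  qed
  also have "\<dots> \<ge> (\<Sum>w\<in>\<Omega>. (1 - 1 / ((a w * z w) / (p w * q w))) / ln 2)"
    by (rule sum_mono, rule log2_ge_one_minus_inverse) (use pos in auto)
  moreover have "(\<Sum>w\<in>\<Omega>. (1 - 1 / ((a w * z w) / (p w * q w))) / ln 2)
      = (N - (\<Sum>w\<in>\<Omega>. p w * q w / (a w * z w))) / ln 2"
    by (simp add: sum_divide_distrib[symmetric] sum_subtractf N_def)
  moreover have "(\<Sum>w\<in>\<Omega>. p w * q w / (a w * z w)) \<le> N"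
    using sum_fiber_card_ratio_le[OF fin, of X Z Y] by (simp add: a_def z_def p_def q_def N_def)
  then have "0 \<le> (N - (\<Sum>w\<in>\<Omega>. p w * q w / (a w * z w))) / ln 2" by simp
  ultimately have "(\<Sum>w\<in>\<Omega>. log 2 (N / a w)) + (\<Sum>w\<in>\<Omega>. log 2 (N / z w))
      \<le> (\<Sum>w\<in>\<Omega>. log 2 (N / p w)) + (\<Sum>w\<in>\<Omega>. log 2 (N / q w))"
    by linarith
  then show ?thesis
    unfolding uniform_entropy_def N_def[symmetric] a_def[symmetric] z_def[symmetric]
      p_def[symmetric] q_def[symmetric]
    using N by (simp add: add_divide_distrib[symmetric] divide_right_mono)
qed

lemma uniform_entropy_subadditive:
  assumes "finite \<Omega>"
  shows "uniform_entropy \<Omega> (\<lambda>w. (X w, Y w)) \<le> uniform_entropy \<Omega> X + uniform_entropy \<Omega> Y"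
proof -
  have "uniform_entropy \<Omega> (\<lambda>w. (X w, Y w, ())) + uniform_entropy \<Omega> (\<lambda>w. ())
     \<le> uniform_entropy \<Omega> (\<lambda>w. (X w, ())) + uniform_entropy \<Omega> (\<lambda>w. (Y w, ()))"
    by (rule uniform_entropy_submodular[OF assms])
  moreover have "uniform_entropy \<Omega> (\<lambda>w. (X w, Y w, ())) = uniform_entropy \<Omega> (\<lambda>w. (X w, Y w))"
    and "uniform_entropy \<Omega> (\<lambda>w. (X w, ())) = uniform_entropy \<Omega> X"
    and "uniform_entropy \<Omega> (\<lambda>w. (Y w, ())) = uniform_entropy \<Omega> Y"
    by (rule uniform_entropy_cong, auto)+
  ultimately show ?thesis by (simp add: uniform_entropy_const)
qed

lemma restrict_eq_iff: "restrict x A = restrict y A \<longleftrightarrow> (\<forall>a\<in>A. x a = y a)"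
  by (auto simp: restrict_def fun_eq_iff)

lemma finite_msgs: "finite V \<Longrightarrow> finite (msgs V t)"
  by (simp add: msgs_def finite_PiE)

lemma msgs_nonempty: "msgs V t \<noteq> {}"
  unfolding msgs_def by (auto simp: PiE_eq_empty_iff lessThan_empty_iff)

lemma card_msgs: "finite V \<Longrightarrow> card (msgs V t) = 2 ^ (t * card V)"
  by (simp add: msgs_def card_PiE power_mult)

lemma ic_solution_iff:
  "ic_solution V N t P E \<longleftrightarrow> (\<forall>x\<in>msgs V t. E x \<in> P) \<and>
     (\<forall>v\<in>V. \<forall>x\<in>msgs V t. \<forall>y\<in>msgs V t.
        E x = E y \<longrightarrow> restrict x (N v) = restrict y (N v) \<longrightarrow> x v = y v)"
  (is "_ \<longleftrightarrow> ?into \<and> ?determined")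
proof
  assume sol: "ic_solution V N t P E"
  have "x v = y v"
    if "v \<in> V" "x \<in> msgs V t" "y \<in> msgs V t" "E x = E y" "restrict x (N v) = restrict y (N v)"
    for v x y
  proof -
    obtain D where "\<forall>x\<in>msgs V t. D (E x) (restrict x (N v)) = x v"
      using sol \<open>v \<in> V\<close> unfolding ic_solution_def by blast
    with that show ?thesis by metis
  qed
  with sol show "?into \<and> ?determined" unfolding ic_solution_def by blast
next
  assume sol: "?into \<and> ?determined"
  have "\<exists>D. \<forall>x\<in>msgs V t. D (E x) (restrict x (N v)) = x v" if v: "v \<in> V" for v
  proof
    let ?D = "\<lambda>p z. (SOME x. x \<in> msgs V t \<and> E x = p \<and> restrict x (N v) = z) v"
    show "\<forall>x\<in>msgs V t. ?D (E x) (restrict x (N v)) = x v"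
    proof
      fix x assume x: "x \<in> msgs V t"
      then have "\<exists>y. y \<in> msgs V t \<and> E y = E x \<and> restrict y (N v) = restrict x (N v)" by blast
      from someI_ex[OF this] show "?D (E x) (restrict x (N v)) = x v" using sol v x by blast
    qed
  qed
  with sol show "ic_solution V N t P E" unfolding ic_solution_def by blast
qed

definition code_entropy :: "'v set \<Rightarrow> nat \<Rightarrow> (('v \<Rightarrow> nat) \<Rightarrow> nat) \<Rightarrow> 'v set \<Rightarrow> real" where
  "code_entropy V t E S = uniform_entropy (msgs V t) (\<lambda>x. (E x, restrict x S))"

lemma code_entropy_submodular:
  assumes fin: "finite V"
  shows "code_entropy V t E (A \<union> B) + code_entropy V t E (A \<inter> B)
         \<le> code_entropy V t E A + code_entropy V t E B"
proof -
  let ?\<Omega> = "msgs V t" and ?Z = "\<lambda>x. (E x, restrict x (A \<inter> B))"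
  have "uniform_entropy ?\<Omega> (\<lambda>x. (restrict x A, restrict x B, ?Z x)) + uniform_entropy ?\<Omega> ?Z
     \<le> uniform_entropy ?\<Omega> (\<lambda>x. (restrict x A, ?Z x)) + uniform_entropy ?\<Omega> (\<lambda>x. (restrict x B, ?Z x))"
    by (rule uniform_entropy_submodular[OF finite_msgs[OF fin]])
  moreover have "uniform_entropy ?\<Omega> (\<lambda>x. (restrict x A, restrict x B, ?Z x)) = code_entropy V t E (A \<union> B)"
    and "uniform_entropy ?\<Omega> (\<lambda>x. (restrict x A, ?Z x)) = code_entropy V t E A"
    and "uniform_entropy ?\<Omega> (\<lambda>x. (restrict x B, ?Z x)) = code_entropy V t E B"
    unfolding code_entropy_def by (rule uniform_entropy_cong, auto simp: restrict_eq_iff)+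
  ultimately show ?thesis unfolding code_entropy_def by simp
qed

lemma code_entropy_insert_decodable:
  assumes sol: "ic_solution V N t P E" and v: "v \<in> V" and NS: "N v \<subseteq> S"
  shows "code_entropy V t E (insert v S) = code_entropy V t E S"
  unfolding code_entropy_def
proof (rule uniform_entropy_cong)
  fix x y assume x: "x \<in> msgs V t" and y: "y \<in> msgs V t"
  show "(E y, restrict y (insert v S)) = (E x, restrict x (insert v S))
        \<longleftrightarrow> (E y, restrict y S) = (E x, restrict x S)"
  proof
    assume "(E y, restrict y S) = (E x, restrict x S)"
    then have E: "E y = E x" and S: "\<forall>a\<in>S. y a = x a" by (auto simp: restrict_eq_iff)
    moreover have "restrict y (N v) = restrict x (N v)" using S NS by (auto simp: restrict_eq_iff)
    ultimately have "y v = x v" using sol x y v unfolding ic_solution_iff by blast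
    then show "(E y, restrict y (insert v S)) = (E x, restrict x (insert v S))"
      using E S by (auto simp: restrict_eq_iff)
  qed (auto simp: restrict_eq_iff)
qed

lemma code_entropy_all:
  assumes fin: "finite V"
  shows "code_entropy V t E V = real (t * card V)"
proof -
  have "fiber_card (msgs V t) (\<lambda>x. (E x, restrict x V)) x = 1" if "x \<in> msgs V t" for x
  proof -
    have "{y \<in> msgs V t. (E y, restrict y V) = (E x, restrict x V)} = {x}"
      using that by (auto simp: msgs_def PiE_def restrict_eq_iff extensional_def fun_eq_iff) metis
    then show ?thesis by (simp add: fiber_card_def)
  qed
  then have "code_entropy V t E V = log 2 (real (card (msgs V t)))"
    using msgs_nonempty[of V t] finite_msgs[OF fin, of t]
    by (simp add: code_entropy_def uniform_entropy_def card_gt_0_iff)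
  also have "\<dots> = real (t * card V)" by (simp add: card_msgs[OF fin] log_nat_power)
  finally show ?thesis .
qed

lemma code_entropy_empty: "code_entropy V t E {} = uniform_entropy (msgs V t) E"
  unfolding code_entropy_def by (rule uniform_entropy_cong) auto

lemma code_entropy_le:
  assumes fin: "finite V" and S: "S \<subseteq> V"
  shows "code_entropy V t E S \<le> code_entropy V t E {} + real (t * card S)"
proof -
  let ?\<Omega> = "msgs V t" and ?R = "(\<lambda>x. restrict x S) ` msgs V t"
  have fin\<Omega>: "finite ?\<Omega>" by (rule finite_msgs[OF fin])
  have fS: "finite S" using fin S finite_subset by blast
  have "?R \<subseteq> PiE S (\<lambda>_. {..<(2::nat) ^ t})"
    using S by (auto simp: msgs_def PiE_def Pi_def)
  then have "card ?R \<le> card (PiE S (\<lambda>_. {..<(2::nat) ^ t}))"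
    by (rule card_mono[rotated]) (simp add: finite_PiE fS)
  moreover have "card ?R > 0" using fin\<Omega> msgs_nonempty by (simp add: card_gt_0_iff)
  ultimately have "log 2 (real (card ?R)) \<le> log 2 (real (card (PiE S (\<lambda>_. {..<(2::nat) ^ t}))))"
    by simp
  also have "\<dots> = real (t * card S)"
    by (simp add: card_PiE fS power_mult[symmetric] log_nat_power mult.commute)
  finally have "uniform_entropy ?\<Omega> (\<lambda>x. restrict x S) \<le> real (t * card S)"
    using uniform_entropy_le_log_card_image[OF fin\<Omega> msgs_nonempty, of "\<lambda>x. restrict x S"]
    by linarith
  then show ?thesis
    using uniform_entropy_subadditive[OF fin\<Omega>, of E "\<lambda>x. restrict x S"]
    by (simp add: code_entropy_def code_entropy_empty[unfolded code_entropy_def])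
qed

lemma code_entropy_empty_le:
  assumes fin: "finite V" and sol: "ic_solution V N t P E" and fin_P: "finite P"
  shows "code_entropy V t E {} \<le> log 2 (real (card P))"
proof -
  let ?\<Omega> = "msgs V t"
  have "code_entropy V t E {} \<le> log 2 (real (card (E ` ?\<Omega>)))"
    unfolding code_entropy_empty
    by (rule uniform_entropy_le_log_card_image[OF finite_msgs[OF fin] msgs_nonempty])
  also have "\<dots> \<le> log 2 (real (card P))"
  proof -
    have "card (E ` ?\<Omega>) \<le> card P"
      using sol by (intro card_mono[OF fin_P]) (auto simp: ic_solution_def)
    moreover have "card (E ` ?\<Omega>) > 0"
      using finite_msgs[OF fin] msgs_nonempty by (simp add: card_gt_0_iff)
    ultimately show ?thesis by simp
  qed
  finally show ?thesis .
qed

lemma mem_circ_nbrsI: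
  assumes "j < n" "[int j - int v = d] (mod int n)" "d \<noteq> 0" "\<bar>d\<bar> \<le> int k"
  shows "j \<in> circ_nbrs n k v"
proof -
  obtain g where "g \<in> {1..k}" "d = int g \<or> d = - int g"
    using assms(3,4) by (intro that[of "nat \<bar>d\<bar>"]) auto
  then show ?thesis using assms(1,2) unfolding circ_nbrs_def by auto
qed

lemma not_mem_circ_nbrs_self:
  assumes "k < n"
  shows "v \<notin> circ_nbrs n k v"
proof
  assume "v \<in> circ_nbrs n k v"
  then obtain g where g: "g \<in> {1..k}" and "[int g = 0] (mod int n) \<or> [- int g = 0] (mod int n)"
    by (auto simp: circ_nbrs_def cong_sym_eq)
  then have "n dvd g" by (auto simp: cong_0_iff)
  then show False using g assms by (auto dest: dvd_imp_le)
qed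

definition arc :: "nat \<Rightarrow> int \<Rightarrow> nat \<Rightarrow> nat set" where
  "arc n a L = {j \<in> {0..<n}. (int j - a) mod int n < int L}"

lemma arc_subset: "arc n a L \<subseteq> {0..<n}"
  by (auto simp: arc_def)

lemma arc_0: "arc n a 0 = {}"
  by (auto simp: arc_def not_less intro: pos_mod_sign)

lemma arc_add_period: "arc n (a + int n) L = arc n a L"
proof -
  have "(int j - (a + int n)) mod int n = (int j - a) mod int n" for j
    using mod_add_self2[of "int j - a - int n" "int n"] by (simp add: algebra_simps)
  then show ?thesis by (simp add: arc_def)
qed

lemma arc_shift:
  assumes "0 \<le> c" "c + int L \<le> int n"
  shows "arc n (a + c) L =
    {j \<in> {0..<n}. c \<le> (int j - a) mod int n \<and> (int j - a) mod int n < c + int L}"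
proof -
  have "(int j - (a + c)) mod int n < int L \<longleftrightarrow>
        c \<le> (int j - a) mod int n \<and> (int j - a) mod int n < c + int L" if "j < n" for j
  proof -
    define d where "d = (int j - a) mod int n"
    have d: "0 \<le> d" "d < int n" using that by (simp_all add: d_def)
    have "(int j - (a + c)) mod int n = (d - c) mod int n"
      by (simp add: d_def mod_diff_left_eq algebra_simps)
    also have "\<dots> = (if c \<le> d then d - c else d - c + int n)"
    proof (cases "c \<le> d")
      case False
      have "(d - c) mod int n = (d - c + int n) mod int n" by simp
      also have "\<dots> = d - c + int n" using d assms False by (intro mod_pos_pos_trivial) auto
      finally show ?thesis using False by simp
    qed (use d assms in \<open>simp add: mod_pos_pos_trivial\<close>)
    finally show ?thesis using d assms unfolding d_def[symmetric] by auto
  qed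
  then show ?thesis by (auto simp: arc_def)
qed

lemma arc_offset_eq_iff:
  assumes "j < n" "0 \<le> c" "c < int n"
  shows "(int j - a) mod int n = c \<longleftrightarrow> j = nat ((a + c) mod int n)"
proof -
  have "(int j - a) mod int n = c \<longleftrightarrow> (int j - a) mod int n = c mod int n"
    using assms by simp
  also have "\<dots> \<longleftrightarrow> int j mod int n = (a + c) mod int n"
    by (simp add: mod_eq_dvd_iff algebra_simps)
  also have "\<dots> \<longleftrightarrow> j = nat ((a + c) mod int n)"
    using assms by auto
  finally show ?thesis .
qed

lemma arc_Un_Int_shift:
  assumes "L + 2 \<le> n"
  shows "arc n a (L + 1) \<union> arc n (a + 1) (L + 1) = arc n a (L + 2)"
    and "arc n a (L + 1) \<inter> arc n (a + 1) (L + 1) = arc n (a + 1) L"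
  using arc_shift[of 0 "L + 1" n a] arc_shift[of 0 "L + 2" n a]
    arc_shift[of 1 "L + 1" n a] arc_shift[of 1 L n a] assms
  by auto

lemma circ_nbrs_middle_offset:
  fixes a :: int
  assumes "2 * k + 1 \<le> n" and j: "j \<in> circ_nbrs n k (nat ((a + int k) mod int n))"
  shows "(int j - a) mod int n < 2 * int k + 1" "(int j - a) mod int n \<noteq> int k"
proof -
  define v where "v = nat ((a + int k) mod int n)"
  obtain g where g: "g \<in> {1..k}"
    and "[int j - int v = int g] (mod int n) \<or> [int j - int v = - int g] (mod int n)"
    using j by (auto simp: circ_nbrs_def v_def)
  moreover have "[int j - a = int k + s] (mod int n)" if "[int j - int v = s] (mod int n)" for s
  proof -
    have "[int v = a + int k] (mod int n)" using assms by (simp add: v_def cong_def)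
    from cong_diff[OF cong_add[OF that this] cong_refl[of a]] show ?thesis
      by (simp add: algebra_simps)
  qed
  ultimately have "[int j - a = int k + int g] (mod int n) \<or> [int j - a = int k - int g] (mod int n)"
    by (metis diff_conv_add_uminus)
  then have "(int j - a) mod int n = int k + int g \<or> (int j - a) mod int n = int k - int g"
    using g assms by (auto simp: cong_def mod_pos_pos_trivial)
  then show "(int j - a) mod int n < 2 * int k + 1" "(int j - a) mod int n \<noteq> int k"
    using g by auto
qed

lemma arc_split_middle:
  fixes a :: int
  assumes "2 * k + 1 \<le> n"
  defines "v \<equiv> nat ((a + int k) mod int n)"
  shows "v < n"
    and "arc n a (2 * k + 1) = insert v (arc n a k \<union> arc n (a + int k + 1) k)"
    and "v \<notin> arc n a k \<union> arc n (a + int k + 1) k"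
    and "arc n a k \<inter> arc n (a + int k + 1) k = {}"
    and "circ_nbrs n k v \<subseteq> arc n a k \<union> arc n (a + int k + 1) k"
proof -
  show v: "v < n" using assms by (simp add: v_def nat_less_iff)
  have is_v: "(int j - a) mod int n = int k \<longleftrightarrow> j = v" if "j < n" for j
    using arc_offset_eq_iff[OF that, of "int k" a] assms by (simp add: v_def)
  have left: "arc n a k = {j \<in> {0..<n}. (int j - a) mod int n < int k}"
    and whole: "arc n a (2 * k + 1) = {j \<in> {0..<n}. (int j - a) mod int n < 2 * int k + 1}"
    by (auto simp: arc_def)
  have right: "arc n (a + int k + 1) k =
      {j \<in> {0..<n}. int k + 1 \<le> (int j - a) mod int n \<and> (int j - a) mod int n < 2 * int k + 1}"
    using arc_shift[of "int k + 1" k n a] assms by (simp add: add.assoc)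
  show "arc n a (2 * k + 1) = insert v (arc n a k \<union> arc n (a + int k + 1) k)"
  proof (intro set_eqI)
    fix j show "j \<in> arc n a (2 * k + 1) \<longleftrightarrow> j \<in> insert v (arc n a k \<union> arc n (a + int k + 1) k)"
      unfolding whole left right using v is_v[of j] by (cases "j < n") auto
  qed
  show "v \<notin> arc n a k \<union> arc n (a + int k + 1) k"
    unfolding left right using v is_v[of v] by auto
  show "arc n a k \<inter> arc n (a + int k + 1) k = {}"
    unfolding left right by auto
  show "circ_nbrs n k v \<subseteq> arc n a k \<union> arc n (a + int k + 1) k"
  proof
    fix j assume j: "j \<in> circ_nbrs n k v"
    then have "j < n" by (simp add: circ_nbrs_def)
    with circ_nbrs_middle_offset[OF assms(1) j[unfolded v_def]]
    show "j \<in> arc n a k \<union> arc n (a + int k + 1) k"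
      unfolding left right by auto
  qed
qed

lemma arc_co_point:
  assumes "2 \<le> n"
  shows "arc n a (n - 1) = {0..<n} - {nat ((a - 1) mod int n)}"
proof -
  have "(a + (int n - 1)) mod int n = (a - 1) mod int n"
    using mod_add_self2[of "a - 1" "int n"] by (simp add: algebra_simps)
  then have is_point: "(int j - a) mod int n = int n - 1 \<longleftrightarrow> j = nat ((a - 1) mod int n)"
    if "j < n" for j
    using arc_offset_eq_iff[OF that, of "int n - 1" a] assms by simp
  have "(int j - a) mod int n < int (n - 1) \<longleftrightarrow> (int j - a) mod int n \<noteq> int n - 1" for j
    using assms pos_mod_bound[of "int n" "int j - a"] by linarith
  then show ?thesis using is_point by (auto simp: arc_def)
qed

lemma concave_chord:
  fixes S :: "nat \<Rightarrow> real"
  assumes concave: "\<And>L. L + 2 \<le> n \<Longrightarrow> S (L + 2) + S L \<le> 2 * S (L + 1)"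
    and "i \<le> j" "j \<le> l" "l \<le> n"
  shows "real (l - j) * (S i - S j) \<le> real (j - i) * (S j - S l)"
proof -
  define \<delta> where "\<delta> p = S p - S (Suc p)" for p
  have \<delta>_mono: "\<delta> p \<le> \<delta> q" if "p \<le> q" "q + 1 \<le> n" for p q
    using that
  proof (induction q rule: dec_induct)
    case (step q)
    then show ?case using concave[of q] by (simp add: \<delta>_def)
  qed simp
  have telescope: "S p - S q = (\<Sum>r\<in>{p..<q}. \<delta> r)" if "p \<le> q" for p q
    using sum_Suc_diff'[OF that, of "\<lambda>r. - S r"] by (simp add: \<delta>_def)
  have "real (l - j) * (S i - S j) = (\<Sum>p\<in>{i..<j}. \<Sum>q\<in>{j..<l}. \<delta> p)"
    by (simp add: telescope[OF \<open>i \<le> j\<close>] sum_distrib_left)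
  also have "\<dots> \<le> (\<Sum>p\<in>{i..<j}. \<Sum>q\<in>{j..<l}. \<delta> q)"
    using assms(4) by (intro sum_mono \<delta>_mono) auto
  also have "\<dots> = real (j - i) * (S j - S l)"
    by (simp add: telescope[OF \<open>j \<le> l\<close>])
  finally show ?thesis .
qed

lemma sum_periodic_shift:
  fixes g :: "int \<Rightarrow> 'a::cancel_comm_monoid_add"
  assumes periodic: "\<And>x. g (x + int n) = g x"
  shows "(\<Sum>a<n. g (int a + int c)) = (\<Sum>a<n. g (int a))"
proof (induction c)
  case (Suc c)
  have "(\<Sum>a<Suc n. g (int a + int c)) = g (int c) + (\<Sum>a<n. g (int a + int (Suc c)))"
    by (subst sum.lessThan_Suc_shift) (simp add: algebra_simps)
  moreover have "(\<Sum>a<Suc n. g (int a + int c)) = (\<Sum>a<n. g (int a + int c)) + g (int c)"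
    using periodic[of "int c"] by (simp add: add.commute)
  ultimately show ?case using Suc by (simp add: add.commute)
qed simp

locale circulant_submodular =
  fixes n k :: nat and f :: "nat set \<Rightarrow> real" and r :: real
  assumes long_cycle: "2 * k + 2 \<le> n"
    and submodular: "\<And>A B. A \<subseteq> {0..<n} \<Longrightarrow> B \<subseteq> {0..<n} \<Longrightarrow> f (A \<union> B) + f (A \<inter> B) \<le> f A + f B"
    and insert_decodable:
      "\<And>v S. v < n \<Longrightarrow> circ_nbrs n k v \<subseteq> S \<Longrightarrow> S \<subseteq> {0..<n} \<Longrightarrow> v \<notin> S \<Longrightarrow> f (insert v S) = f S - r"
    and f_full: "f {0..<n} = 0"
    and f_le_empty: "\<And>S. S \<subseteq> {0..<n} \<Longrightarrow> f S \<le> f {}"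
begin

definition arc_sum :: "nat \<Rightarrow> real" where
  "arc_sum L = (\<Sum>a<n. f (arc n (int a) L))"

lemma arc_sum_shift: "(\<Sum>a<n. f (arc n (int a + int c) L)) = arc_sum L"
  unfolding arc_sum_def
  by (rule sum_periodic_shift[where g = "\<lambda>a. f (arc n a L)"]) (simp add: arc_add_period)

lemma arc_sum_0: "arc_sum 0 = real n * f {}"
  by (simp add: arc_sum_def arc_0)

lemma arc_sum_le_0: "arc_sum L \<le> arc_sum 0"
  unfolding arc_sum_def arc_0 by (intro sum_mono f_le_empty arc_subset)

lemma arc_sum_concave:
  assumes "L + 2 \<le> n"
  shows "arc_sum (L + 2) + arc_sum L \<le> 2 * arc_sum (L + 1)"
proof -
  have "f (arc n a (L + 2)) + f (arc n (a + 1) L) \<le> f (arc n a (L + 1)) + f (arc n (a + 1) (L + 1))"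
    for a
    using submodular[of "arc n a (L + 1)" "arc n (a + 1) (L + 1)"] arc_subset arc_Un_Int_shift[OF assms]
    by simp
  then have "(\<Sum>a<n. f (arc n (int a) (L + 2)) + f (arc n (int a + int 1) L))
      \<le> (\<Sum>a<n. f (arc n (int a) (L + 1)) + f (arc n (int a + int 1) (L + 1)))"
    by (intro sum_mono) simp
  then show ?thesis unfolding sum.distrib arc_sum_shift arc_sum_def[symmetric] by simp
qed

lemma arc_sum_middle: "arc_sum (2 * k + 1) + arc_sum 0 + real n * r \<le> 2 * arc_sum k"
proof -
  have per_arc: "f (arc n a (2 * k + 1)) + f {} + r \<le> f (arc n a k) + f (arc n (a + int (k + 1)) k)"
    for a
  proof -
    have "2 * k + 1 \<le> n" using long_cycle by simp
    note split = arc_split_middle[OF this, where a = a]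
    have "f (arc n a (2 * k + 1)) = f (arc n a k \<union> arc n (a + int k + 1) k) - r"
      using long_cycle split
      by (subst split(2)) (auto intro!: insert_decodable dest: arc_subset[THEN subsetD])
    moreover have "f (arc n a k \<union> arc n (a + int k + 1) k) + f {} \<le> f (arc n a k) + f (arc n (a + int k + 1) k)"
      using submodular[of "arc n a k" "arc n (a + int k + 1) k"] arc_subset split(4) by simp
    ultimately show ?thesis by (simp add: ac_simps)
  qed
  have "(\<Sum>a<n. f (arc n (int a) (2 * k + 1)) + f {} + r)
      \<le> (\<Sum>a<n. f (arc n (int a) k) + f (arc n (int a + int (k + 1)) k))"
    by (intro sum_mono per_arc)
  then show ?thesis unfolding sum.distrib arc_sum_shift arc_sum_def[symmetric] arc_sum_0 by simp
qed

lemma arc_sum_co_point: "arc_sum (n - 1) = real n * r"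
proof -
  have "f (arc n a (n - 1)) = r" for a
  proof -
    define v where "v = nat ((a - 1) mod int n)"
    have v: "v < n" using long_cycle by (simp add: v_def nat_less_iff)
    have "circ_nbrs n k v \<subseteq> {0..<n} - {v}"
      using not_mem_circ_nbrs_self[of k n v] long_cycle by (auto simp: circ_nbrs_def)
    then have "f (insert v ({0..<n} - {v})) = f ({0..<n} - {v}) - r"
      using v by (intro insert_decodable) auto
    moreover have "insert v ({0..<n} - {v}) = {0..<n}" using v by auto
    ultimately show ?thesis
      using f_full arc_co_point[of n a] long_cycle by (simp add: v_def)
  qed
  then show ?thesis by (simp add: arc_sum_def)
qed

theorem f_empty_lower_bound: "real n * r / (real k + 1) \<le> f {}"
proof -
  let ?drop = "arc_sum k - arc_sum (2 * k + 1)"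
  have "real (n - 1 - (2 * k + 1)) * ?drop
      \<le> real (2 * k + 1 - k) * (arc_sum (2 * k + 1) - arc_sum (n - 1))"
    using long_cycle by (intro concave_chord arc_sum_concave) auto
  moreover have "real (n - 1 - (2 * k + 1)) = real n - 2 * real k - 2"
    and "real (2 * k + 1 - k) = real k + 1"
    using long_cycle by auto
  ultimately have chord: "(real n - 2 * real k - 2) * ?drop + (real k + 1) * (real n * r)
      \<le> (real k + 1) * arc_sum (2 * k + 1)"
    using arc_sum_co_point by (simp add: algebra_simps)
  have drop: "real n * r \<le> ?drop"
    using arc_sum_middle arc_sum_le_0[of k] by linarith
  have "real n * (real n * r) = (real n - real k - 1) * (real n * r) + (real k + 1) * (real n * r)"
    by (simp add: algebra_simps)
  also have "\<dots> \<le> (real n - real k - 1) * ?drop + (real k + 1) * (real n * r)"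
    using drop long_cycle by (intro add_right_mono mult_left_mono) auto
  also have "\<dots> = (real k + 1) * ?drop + ((real n - 2 * real k - 2) * ?drop + (real k + 1) * (real n * r))"
    by (simp add: algebra_simps)
  also have "\<dots> \<le> (real k + 1) * ?drop + (real k + 1) * arc_sum (2 * k + 1)"
    using chord by simp
  also have "\<dots> = (real k + 1) * arc_sum k"
    by (simp add: algebra_simps)
  also have "\<dots> \<le> (real k + 1) * (real n * f {})"
    using arc_sum_le_0[of k] by (intro mult_left_mono) (auto simp: arc_sum_0)
  finally have "real n * (real n * r) \<le> real n * ((real k + 1) * f {})"
    by (simp add: ac_simps)
  then have "real n * r \<le> (real k + 1) * f {}"
    using long_cycle by simp
  then show ?thesis by (simp add: divide_le_eq add_pos_nonneg mult.commute)
qed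

end

lemma window_index_cong:
  assumes "i \<le> n"
  shows "[int (((v + n - i) mod n + i') mod n) - int v = int i' - int i] (mod int n)"
proof -
  have "[int (((v + n - i) mod n + i') mod n) = int (v + n - i) + int i'] (mod int n)"
    unfolding cong_def by (metis mod_add_left_eq mod_mod_trivial of_nat_add of_nat_mod)
  also have "int (v + n - i) + int i' = (int i' - int i + int v) + int n" using assms by simp
  also have "[\<dots> = int i' - int i + int v] (mod int n)" by (simp add: cong_def)
  finally have "[int (((v + n - i) mod n + i') mod n) - int v = (int i' - int i + int v) - int v] (mod int n)"
    by (rule cong_diff) (rule cong_refl)
  then show ?thesis by simp
qed

definition window_parity :: "nat \<Rightarrow> nat \<Rightarrow> (nat \<Rightarrow> nat) \<Rightarrow> nat \<Rightarrow> bool" where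
  "window_parity n m x j \<longleftrightarrow> odd (\<Sum>i<m. of_bool (bit (x ((j + i) mod n)) i) :: nat)"

lemma odd_of_bool_add_cancel:
  "odd (of_bool p + m :: nat) = odd (of_bool q + m) \<Longrightarrow> p = q"
  by (cases p; cases q) auto

lemma window_parity_determines_bit:
  fixes x y :: "nat \<Rightarrow> nat"
  assumes "k < n" "v < n" "i \<le> k"
    and parity: "window_parity n (k + 1) x ((v + n - i) mod n) = window_parity n (k + 1) y ((v + n - i) mod n)"
    and side_info: "\<forall>u\<in>circ_nbrs n k v. x u = y u"
  shows "bit (x v) i = bit (y v) i"
proof -
  let ?j = "(v + n - i) mod n"
  define rest :: "(nat \<Rightarrow> nat) \<Rightarrow> nat"
    where "rest x = (\<Sum>i'\<in>{..<k + 1} - {i}. of_bool (bit (x ((?j + i') mod n)) i'))" for x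
  have at_v: "(?j + i) mod n = v" using assms by (simp add: mod_add_left_eq)
  have i: "i \<in> {..<k + 1}" using assms by simp
  have split: "(\<Sum>i'<k + 1. of_bool (bit (x ((?j + i') mod n)) i') :: nat)
      = of_bool (bit (x v) i) + rest x" for x
    unfolding rest_def by (subst sum.remove[OF finite_lessThan i]) (simp only: at_v)
  have "(?j + i') mod n \<in> circ_nbrs n k v" if "i' < k + 1" "i' \<noteq> i" for i'
    using that assms by (intro mem_circ_nbrsI[OF _ window_index_cong]) auto
  then have "rest x = rest y" unfolding rest_def using side_info by (intro sum.cong) auto
  then show ?thesis
    using parity split[of x] split[of y] odd_of_bool_add_cancel unfolding window_parity_def by metis
qed

lemma window_parity_solution:
  assumes "k < n"
  shows "\<exists>E. ic_solution {0..<n} (circ_nbrs n k) (k + 1) {..<2 ^ n} E"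
proof -
  define W where "W = PiE {0..<n} (\<lambda>_. UNIV :: bool set)"
  have "finite W" "card W = card {..<(2::nat) ^ n}" by (simp_all add: W_def finite_PiE card_PiE)
  then obtain enc where enc: "bij_betw enc W {..<(2::nat) ^ n}"
    using finite_same_card_bij by blast
  define E where "E x = enc (\<lambda>j\<in>{0..<n}. window_parity n (k + 1) x j)" for x
  have "ic_solution {0..<n} (circ_nbrs n k) (k + 1) {..<2 ^ n} E"
    unfolding ic_solution_iff
  proof (intro conjI ballI impI)
    fix x show "E x \<in> {..<2 ^ n}" using bij_betw_apply[OF enc] by (simp add: E_def W_def)
  next
    fix v x y
    assume v: "v \<in> {0..<n}" and x: "x \<in> msgs {0..<n} (k + 1)" and y: "y \<in> msgs {0..<n} (k + 1)"
      and "E x = E y" and side_info: "restrict x (circ_nbrs n k v) = restrict y (circ_nbrs n k v)"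
    then have "(\<lambda>j\<in>{0..<n}. window_parity n (k + 1) x j) = (\<lambda>j\<in>{0..<n}. window_parity n (k + 1) y j)"
      using bij_betw_imp_inj_on[OF enc] by (auto simp: E_def W_def inj_on_def)
    then have "window_parity n (k + 1) x j = window_parity n (k + 1) y j" if "j < n" for j
      using that by (metis atLeastLessThan_iff restrict_apply' zero_le)
    then have "bit (x v) i = bit (y v) i" if "i < k + 1" for i
      using assms v that side_info
      by (intro window_parity_determines_bit) (auto simp: restrict_eq_iff)
    moreover have "x v < 2 ^ (k + 1)" "y v < 2 ^ (k + 1)"
      using x y v by (auto simp: msgs_def)
    ultimately show "x v = y v"
      by (metis bit_take_bit_iff bit_eq_iff take_bit_nat_eq_self_iff)
  qed
  then show ?thesis by blast
qed

lemma ic_solution_exists: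
  assumes "finite V"
  shows "\<exists>P E. finite P \<and> ic_solution V N t P E"
proof -
  obtain E where E: "bij_betw E (msgs V t) {0..<card (msgs V t)}"
    using ex_bij_betw_finite_nat[OF finite_msgs[OF assms]] by blast
  have "x = y" if "x \<in> msgs V t" "y \<in> msgs V t" "E x = E y" for x y
    using inj_onD[OF bij_betw_imp_inj_on[OF E] that(3,1,2)] .
  then have "ic_solution V N t {0..<card (msgs V t)} E"
    unfolding ic_solution_iff using bij_betw_apply[OF E] by blast
  then show ?thesis by blast
qed

lemma beta_t_attained:
  assumes "finite V"
  obtains P E where "finite P" "ic_solution V N t P E"
    and "beta_t V N t = nat \<lceil>log 2 (real (card P))\<rceil>"
proof -
  have "\<exists>m P E. finite P \<and> ic_solution V N t P E \<and> m = nat \<lceil>log 2 (real (card P))\<rceil>"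
    using ic_solution_exists[OF assms] by blast
  from LeastI_ex[OF this] show ?thesis using that unfolding beta_t_def by blast
qed

lemma beta_t_le:
  assumes "finite P" "ic_solution V N t P E"
  shows "beta_t V N t \<le> nat \<lceil>log 2 (real (card P))\<rceil>"
  unfolding beta_t_def using assms by (intro Least_le) blast

lemma circ_solution_lower_bound:
  assumes long_cycle: "2 * k + 2 \<le> n" and fin_P: "finite P"
    and sol: "ic_solution {0..<n} (circ_nbrs n k) t P E"
  shows "real t * real n / (real k + 1) \<le> log 2 (real (card P))"
proof -
  let ?V = "{0..<n}"
  let ?f = "\<lambda>S. code_entropy ?V t E S - real t * real (card S)"
  interpret circulant_submodular n k ?f "real t"
  proof
    fix A B assume "A \<subseteq> ?V" "B \<subseteq> ?V"
    then have "card (A \<union> B) + card (A \<inter> B) = card A + card B"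
      using card_Un_Int[of A B] finite_subset by (metis finite_atLeastLessThan)
    then have "real t * real (card (A \<union> B)) + real t * real (card (A \<inter> B))
        = real t * real (card A) + real t * real (card B)"
      by (metis distrib_left of_nat_add)
    then show "?f (A \<union> B) + ?f (A \<inter> B) \<le> ?f A + ?f B"
      using code_entropy_submodular[of ?V t E A B] by simp
  next
    fix v S assume "v < n" "circ_nbrs n k v \<subseteq> S" "S \<subseteq> ?V" "v \<notin> S"
    then show "?f (insert v S) = ?f S - real t"
      using code_entropy_insert_decodable[OF sol] finite_subset[of S ?V]
      by (simp add: algebra_simps)
  next
    show "?f ?V = 0" using code_entropy_all[of ?V t E] by simp
  next
    fix S assume "S \<subseteq> ?V"
    then show "?f S \<le> ?f {}" using code_entropy_le[of ?V S t E] by simp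
  qed (fact long_cycle)
  have "real n * real t / (real k + 1) \<le> ?f {}" by (rule f_empty_lower_bound)
  also have "?f {} \<le> log 2 (real (card P))"
    using code_entropy_empty_le[OF _ sol fin_P] by simp
  finally show ?thesis by (simp add: mult.commute)
qed

lemma circ_rate_lower_bound:
  assumes "2 * k + 2 \<le> n" and "0 < t"
  shows "real n / (real k + 1) \<le> real (beta_t {0..<n} (circ_nbrs n k) t) / real t"
proof -
  obtain P E where "finite P" "ic_solution {0..<n} (circ_nbrs n k) t P E"
    and beta: "beta_t {0..<n} (circ_nbrs n k) t = nat \<lceil>log 2 (real (card P))\<rceil>"
    by (rule beta_t_attained[OF finite_atLeastLessThan, where N = "circ_nbrs n k" and t = t])
  then have "real t * real n / (real k + 1) \<le> log 2 (real (card P))"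
    by (intro circ_solution_lower_bound[OF assms(1)])
  also have "\<dots> \<le> real (beta_t {0..<n} (circ_nbrs n k) t)"
    unfolding beta by (rule real_nat_ceiling_ge)
  finally show ?thesis using assms(2) by (simp add: le_divide_eq mult.commute)
qed

lemma circ_beta_t_upper_bound:
  assumes "k < n"
  shows "beta_t {0..<n} (circ_nbrs n k) (k + 1) \<le> n"
proof -
  obtain E where "ic_solution {0..<n} (circ_nbrs n k) (k + 1) {..<2 ^ n} E"
    using window_parity_solution[OF assms] by blast
  then show ?thesis using beta_t_le[of "{..<2 ^ n}"] by (simp add: log_nat_power)
qed

theorem theorem5p3:
  fixes n k :: nat
  assumes "n \<ge> 4" and "real k < (real n - 1) / 2"
  shows "broadcast_rate {0..<n} (circ_nbrs n k) = real n / (real k + 1)"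
proof -
  have "real (2 * k + 1) < real n" using assms(2) by simp
  then have long_cycle: "2 * k + 2 \<le> n" by (simp only: of_nat_less_iff)
  let ?rate = "\<lambda>t. real (beta_t {0..<n} (circ_nbrs n k) t) / real t"
  have lower: "real n / (real k + 1) \<le> ?rate t" if "t \<in> {1..}" for t
    using circ_rate_lower_bound[OF long_cycle] that by simp
  have "?rate (k + 1) \<le> real n / (real k + 1)"
    using circ_beta_t_upper_bound[of k n] long_cycle by (simp add: divide_right_mono add.commute)
  then have "(INF t\<in>{1..}. ?rate t) \<le> real n / (real k + 1)"
    using lower by (intro cINF_lower2[where x = "k + 1"] bdd_belowI2) auto
  moreover have "real n / (real k + 1) \<le> (INF t\<in>{1..}. ?rate t)"
    using lower by (intro cINF_greatest) auto
  ultimately show ?thesis unfolding broadcast_rate_def by (rule antisym)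
qed

end
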